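(* Let $k\geq 2$, let $A_1\subseteq A_2$ be sets, and let $F_1\colon[A_1]^k\to\mathcal{P}(A_1)$ and $F_2\colon[A_2]^k\to\mathcal{P}(A_2)$. Let $\Gamma_1,\Gamma_2$ be sets of functions such that $\Gamma_i$ $k$-generates $F_i$ for $i=1,2$, and suppose $\Gamma_2|_{A_1}=\Gamma_1$. Then for every $\bar\gamma\in[A_1]^k$ we have $F_1(\bar\gamma)=F_2(\bar\gamma)\cap A_1$.
   Context: For a set $S$ and $k<\omega$, $[S]^k$ is the set of $k$-element subsets of $S$. Let $A$ be a set and $k\geq 2$. Let $\Gamma$ be a set of functions of the form $\rho\colon[A]^2\to L_\rho$, where each $L_\rho$ is a linear order with order $<_\rho$ (formally $\Gamma$ is a set of pairs $(\rho,L_\rho)$). A map $F\colon[A]^k\to\mathcal{P}(A)$ is said to be $k$-generated by $\Gamma$ if for all $\bar\gamma\in[A]^k$: $x\in F(\bar\gamma)$ if and only if $x\in A$ and for every $\rho\in\Gamma$ and every $\gamma\in\bar\gamma$ there exist $\gamma'\neq\gamma''$ in $\bar\gamma$ with $\rho\{x,\gamma\}\leq_\rho\rho\{\gamma',\gamma''\}$. For $B\subseteq A$, $\Gamma|_B=\{\rho|_{[B]^2}:\rho\in\Gamma\}$ (each with the same linear order $L_\rho$). *)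

theory Defs
  imports Main "HOL-Library.Ramsey" "HOL-Library.FuncSet"
begin

text \<open>A "set of functions" Gamma on A: each element is a pair (rho, L) with
  rho a function on [A]^2 (extensional outside [A]^2) with values in the carrier
  Field L of a linear order L.\<close>
definition pair_fun_family :: "'a set \<Rightarrow> (('a set \<Rightarrow> 'l) \<times> 'l rel) set \<Rightarrow> bool" where
  "pair_fun_family A \<Gamma> \<longleftrightarrow>
     (\<forall>(\<rho>, L) \<in> \<Gamma>. linear_order L \<and> \<rho> \<in> extensional ([A]\<^bsup>2\<^esup>)
        \<and> (\<forall>e \<in> [A]\<^bsup>2\<^esup>. \<rho> e \<in> Field L))"

definition restrict_family :: "'a set \<Rightarrow> (('a set \<Rightarrow> 'l) \<times> 'l rel) set \<Rightarrow> (('a set \<Rightarrow> 'l) \<times> 'l rel) set" where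
  "restrict_family B \<Gamma> = (\<lambda>(\<rho>, L). (restrict \<rho> ([B]\<^bsup>2\<^esup>), L)) ` \<Gamma>"

definition k_generated :: "nat \<Rightarrow> 'a set \<Rightarrow> (('a set \<Rightarrow> 'l) \<times> 'l rel) set \<Rightarrow> ('a set \<Rightarrow> 'a set) \<Rightarrow> bool" where
  "k_generated k A \<Gamma> F \<longleftrightarrow>
     (\<forall>\<gamma>s \<in> [A]\<^bsup>k\<^esup>. \<forall>x. x \<in> F \<gamma>s \<longleftrightarrow>
        x \<in> A \<and> (\<forall>(\<rho>, L) \<in> \<Gamma>. \<forall>\<gamma> \<in> \<gamma>s. \<exists>\<gamma>' \<in> \<gamma>s. \<exists>\<gamma>'' \<in> \<gamma>s.
            \<gamma>' \<noteq> \<gamma>'' \<and> (\<rho> {x, \<gamma>}, \<rho> {\<gamma>', \<gamma>''}) \<in> L))"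

end

theory Submission
  imports Defs
begin

text \<open>Membership of x in F(\<gamma>s) depends only on the values of the functions in \<Gamma> on
  pairs from {x} \<union> \<gamma>s. For x \<in> A1 and \<gamma>s \<subseteq> A1 these pairs lie in A1, where
  restricting to pairs from A1 changes nothing; degenerate pairs {a, a} are not
  two-element sets, so there both functions take the default value of extensionality.\<close>

definition generating_condition ::
    "(('a set \<Rightarrow> 'l) \<times> 'l rel) set \<Rightarrow> 'a set \<Rightarrow> 'a \<Rightarrow> bool" where
  "generating_condition \<Gamma> \<gamma>s x \<longleftrightarrow>
     (\<forall>(\<rho>, L) \<in> \<Gamma>. \<forall>\<gamma> \<in> \<gamma>s. \<exists>\<gamma>' \<in> \<gamma>s. \<exists>\<gamma>'' \<in> \<gamma>s.
        \<gamma>' \<noteq> \<gamma>'' \<and> (\<rho> {x, \<gamma>}, \<rho> {\<gamma>', \<gamma>''}) \<in> L)"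

lemma k_generated_eq:
  assumes "k_generated k A \<Gamma> F" and "\<gamma>s \<in> [A]\<^bsup>k\<^esup>"
  shows "F \<gamma>s = {x \<in> A. generating_condition \<Gamma> \<gamma>s x}"
  using assms unfolding k_generated_def generating_condition_def by blast

lemma restrict_nsets2_doubleton:
  assumes "\<rho> \<in> extensional ([A2]\<^bsup>2\<^esup>)" and "A1 \<subseteq> A2" and "a \<in> A1" and "b \<in> A1"
  shows "restrict \<rho> ([A1]\<^bsup>2\<^esup>) {a, b} = \<rho> {a, b}"
proof (cases "a = b")
  case True
  then have "{a, b} \<notin> [A1]\<^bsup>2\<^esup>" and "{a, b} \<notin> [A2]\<^bsup>2\<^esup>"
    by (auto simp: nsets_def)
  with assms(1) show ?thesis
    unfolding extensional_def restrict_def by auto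
next
  case False
  with assms(3,4) have "{a, b} \<in> [A1]\<^bsup>2\<^esup>"
    by (auto simp: nsets_def)
  then show ?thesis
    by simp
qed

lemma generating_condition_restrict_family:
  assumes "pair_fun_family A2 \<Gamma>" and "A1 \<subseteq> A2" and "\<gamma>s \<subseteq> A1" and "x \<in> A1"
  shows "generating_condition (restrict_family A1 \<Gamma>) \<gamma>s x \<longleftrightarrow> generating_condition \<Gamma> \<gamma>s x"
proof -
  have restrict_agrees: "restrict \<rho> ([A1]\<^bsup>2\<^esup>) {a, b} = \<rho> {a, b}"
    if "(\<rho>, L) \<in> \<Gamma>" and "a \<in> insert x \<gamma>s" and "b \<in> insert x \<gamma>s" for \<rho> L a b
  proof (rule restrict_nsets2_doubleton)
    show "\<rho> \<in> extensional ([A2]\<^bsup>2\<^esup>)"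
      using assms(1) that(1) unfolding pair_fun_family_def by blast
  qed (use assms(2-4) that(2,3) in auto)
  have restrict_bex: "(\<exists>\<gamma>' \<in> \<gamma>s. \<exists>\<gamma>'' \<in> \<gamma>s. \<gamma>' \<noteq> \<gamma>''
        \<and> (restrict \<rho> ([A1]\<^bsup>2\<^esup>) {x, \<gamma>}, restrict \<rho> ([A1]\<^bsup>2\<^esup>) {\<gamma>', \<gamma>''}) \<in> L)
      \<longleftrightarrow> (\<exists>\<gamma>' \<in> \<gamma>s. \<exists>\<gamma>'' \<in> \<gamma>s. \<gamma>' \<noteq> \<gamma>'' \<and> (\<rho> {x, \<gamma>}, \<rho> {\<gamma>', \<gamma>''}) \<in> L)"
    if "(\<rho>, L) \<in> \<Gamma>" and "\<gamma> \<in> \<gamma>s" for \<rho> L \<gamma>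
    using restrict_agrees[OF that(1)] that(2) by auto
  show ?thesis
    unfolding generating_condition_def restrict_family_def
    using restrict_bex by (auto simp: ball_simps)
qed

theorem lemma2p4:
  fixes k :: nat and A1 A2 :: "'a set" and F1 F2 :: "'a set \<Rightarrow> 'a set"
    and \<Gamma>1 \<Gamma>2 :: "(('a set \<Rightarrow> 'l) \<times> 'l rel) set"
  assumes "k \<ge> 2" and "A1 \<subseteq> A2"
    and "F1 \<in> [A1]\<^bsup>k\<^esup> \<rightarrow> Pow A1" and "F2 \<in> [A2]\<^bsup>k\<^esup> \<rightarrow> Pow A2"
    and "pair_fun_family A1 \<Gamma>1" and "pair_fun_family A2 \<Gamma>2"
    and "k_generated k A1 \<Gamma>1 F1" and "k_generated k A2 \<Gamma>2 F2"
    and "restrict_family A1 \<Gamma>2 = \<Gamma>1"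
  shows "\<forall>\<gamma>s \<in> [A1]\<^bsup>k\<^esup>. F1 \<gamma>s = F2 \<gamma>s \<inter> A1"
proof
  fix \<gamma>s assume \<gamma>s_A1: "\<gamma>s \<in> [A1]\<^bsup>k\<^esup>"
  then have "\<gamma>s \<in> [A2]\<^bsup>k\<^esup>" and "\<gamma>s \<subseteq> A1"
    using \<open>A1 \<subseteq> A2\<close> by (auto simp: nsets_def)
  have "F1 \<gamma>s = {x \<in> A1. generating_condition (restrict_family A1 \<Gamma>2) \<gamma>s x}"
    using k_generated_eq[OF assms(7) \<gamma>s_A1] by (simp add: assms(9))
  also have "\<dots> = {x \<in> A1. generating_condition \<Gamma>2 \<gamma>s x}"
    using generating_condition_restrict_family[OF assms(6,2) \<open>\<gamma>s \<subseteq> A1\<close>] by blast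
  also have "\<dots> = F2 \<gamma>s \<inter> A1"
    using k_generated_eq[OF assms(8) \<open>\<gamma>s \<in> [A2]\<^bsup>k\<^esup>\<close>] \<open>A1 \<subseteq> A2\<close> by blast
  finally show "F1 \<gamma>s = F2 \<gamma>s \<inter> A1" .
qed

end
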